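(* Let $\mathcal{P}$ be a data distribution on $\mathcal{X}\times[C]$, $D_T$ a fixed test set, and $z_i$ a consistently helpful or consistently harmful training point (as defined in the context). For $k\in\{0,\dots,n-1\}$ let $\tau_k=\mathbb{E}_{D_N\sim\mathcal{P}^{n-1}|z_i}[\Delta^{D_N}_{z_i}(k,D_T)]$ and $\delta_k=\mathrm{Var}_{D_N\sim\mathcal{P}^{n-1}|z_i}(\Delta^{D_N}_{z_i}(k,D_T))$, where $D_N\sim\mathcal{P}^{n-1}|z_i$ means $D_N$ consists of $z_i$ and $n-1$ further points drawn i.i.d. from $\mathcal{P}$. Assume $n^{-1}\sum_{k=0}^{n-1}\delta_k\le\delta_{n-1}$ and $|\tau_0|\ge|\tau_1|\ge\dots\ge|\tau_{n-1}|$. Then $$\frac{n^{-1}\sum_{k=0}^{n-1}\delta_k}{\left(n^{-1}\sum_{k=0}^{n-1}\tau_k\right)^2}\le\frac{\delta_{n-1}}{\tau_{n-1}^2}.$$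
   Context: For $S\subseteq N=\{1,\dots,n\}$, $f_S$ is the classifier obtained by training (by a fixed procedure) on $\{z_j:j\in S\}\subseteq D_N$, and $U(S,D_T)=\frac{1}{|D_T|}\sum_{(x_t,y_t)\in D_T}\mathbf{1}[f_S(x_t)=y_t]$. The marginal contribution of $z_i$ to subsets of size $k$ is $\Delta^{D_N}_{z_i}(k,D_T)=\binom{n-1}{k}^{-1}\sum_{S\subseteq N\setminus\{i\},\,|S|=k}\big(U(S\cup\{i\},D_T)-U(S,D_T)\big)$. The point $z_i$ is consistently helpful if $\tau_k\ge0$ for all $k\in\{0,\dots,n-1\}$ and consistently harmful if $\tau_k<0$ for all such $k$. *)

theory Defs
  imports "HOL-Probability.Probability"
begin

text \<open>The training data set D_N is indexed by
  positions {0..<n} (the paper's N = {1..n}, shifted by one), given as a function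
  D :: nat => 'x * 'y. A fixed training procedure maps a list of training points
  to a classifier; f_S is obtained by training on the points with index in S
  (listed in increasing index order).\<close>

definition classifier_of ::
  "(('x \<times> 'y) list \<Rightarrow> 'x \<Rightarrow> 'y) \<Rightarrow> (nat \<Rightarrow> 'x \<times> 'y) \<Rightarrow> nat set \<Rightarrow> 'x \<Rightarrow> 'y" where
  "classifier_of train D S = train (map D (sorted_list_of_set S))"

text \<open>Utility: test accuracy of f_S on the test set D_T (a list, i.e. a multiset of points).\<close>
definition utility ::
  "(('x \<times> 'y) list \<Rightarrow> 'x \<Rightarrow> 'y) \<Rightarrow> ('x \<times> 'y) list \<Rightarrow> (nat \<Rightarrow> 'x \<times> 'y) \<Rightarrow> nat set \<Rightarrow> real" where
  "utility train DT D S =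
     (\<Sum>t\<leftarrow>DT. if classifier_of train D S (fst t) = snd t then 1 else 0) / real (length DT)"

definition marg_contrib ::
  "(('x \<times> 'y) list \<Rightarrow> 'x \<Rightarrow> 'y) \<Rightarrow> ('x \<times> 'y) list \<Rightarrow> nat \<Rightarrow> (nat \<Rightarrow> 'x \<times> 'y) \<Rightarrow> nat \<Rightarrow> nat \<Rightarrow> real" where
  "marg_contrib train DT n D i k =
     (\<Sum>S\<in>{S. S \<subseteq> {0..<n} - {i} \<and> card S = k}.
        utility train DT D (insert i S) - utility train DT D S) / real ((n - 1) choose k)"

text \<open>Distribution of D_N conditioned on z_i: position i holds z_i, the other n-1
  positions are i.i.d. samples from P.\<close>
definition others_dist :: "('x \<times> 'y) measure \<Rightarrow> nat \<Rightarrow> nat \<Rightarrow> (nat \<Rightarrow> 'x \<times> 'y) measure" where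
  "others_dist P n i = PiM ({0..<n} - {i}) (\<lambda>_. P)"

definition tau_k ::
  "('x \<times> 'y) measure \<Rightarrow> (('x \<times> 'y) list \<Rightarrow> 'x \<Rightarrow> 'y) \<Rightarrow> ('x \<times> 'y) list \<Rightarrow> nat \<Rightarrow> nat \<Rightarrow> ('x \<times> 'y) \<Rightarrow> nat \<Rightarrow> real" where
  "tau_k P train DT n i zi k =
     prob_space.expectation (others_dist P n i) (\<lambda>w. marg_contrib train DT n (w(i := zi)) i k)"

definition delta_k ::
  "('x \<times> 'y) measure \<Rightarrow> (('x \<times> 'y) list \<Rightarrow> 'x \<Rightarrow> 'y) \<Rightarrow> ('x \<times> 'y) list \<Rightarrow> nat \<Rightarrow> nat \<Rightarrow> ('x \<times> 'y) \<Rightarrow> nat \<Rightarrow> real" where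
  "delta_k P train DT n i zi k =
     prob_space.variance (others_dist P n i) (\<lambda>w. marg_contrib train DT n (w(i := zi)) i k)"

end

theory Submission
  imports Defs
begin

text \<open>Since the tau_k share a sign, the absolute value of their mean is the mean of the
  |tau_k|, which by monotonicity dominates the smallest one, |tau_(n-1)|. So the squared mean
  of the tau_k is at least tau_(n-1)^2, while the mean of the delta_k is at most delta_(n-1) by
  hypothesis; as variances are nonnegative, the quotient only grows.\<close>

lemma delta_k_nonneg: "0 \<le> delta_k P train DT n i zi k"
  unfolding delta_k_def by (rule integral_nonneg_AE) auto

lemma le_of_step_decreasing:
  fixes f :: "nat \<Rightarrow> 'a::order"
  assumes step: "\<forall>k. k + 1 < n \<longrightarrow> f (k + 1) \<le> f k"
    and "k \<le> j" "j < n"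
  shows "f j \<le> f k"
  using \<open>k \<le> j\<close> \<open>j < n\<close>
proof (induction j rule: dec_induct)
  case (step j)
  then have "f (Suc j) \<le> f j" using assms(1) by simp
  also have "f j \<le> f k" using step by simp
  finally show ?case .
qed simp

lemma abs_sum_same_sign:
  fixes f :: "'a \<Rightarrow> 'b::ordered_ab_group_add_abs"
  assumes "(\<forall>k\<in>A. 0 \<le> f k) \<or> (\<forall>k\<in>A. f k \<le> 0)"
  shows "\<bar>sum f A\<bar> = (\<Sum>k\<in>A. \<bar>f k\<bar>)"
  using assms
proof
  assume "\<forall>k\<in>A. 0 \<le> f k"
  then show ?thesis by (simp add: sum_nonneg)
next
  assume nonpos: "\<forall>k\<in>A. f k \<le> 0"
  then have "\<bar>sum f A\<bar> = - sum f A" by (simp add: sum_nonpos)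
  also have "\<dots> = (\<Sum>k\<in>A. \<bar>f k\<bar>)"
    unfolding sum_negf[symmetric] using nonpos by (intro sum.cong) auto
  finally show ?thesis .
qed

lemma abs_mean_ge_last:
  fixes t :: "nat \<Rightarrow> 'a::linordered_field"
  assumes "0 < n"
    and same_sign: "(\<forall>k<n. 0 \<le> t k) \<or> (\<forall>k<n. t k \<le> 0)"
    and abs_decr: "\<forall>k. k + 1 < n \<longrightarrow> \<bar>t (k + 1)\<bar> \<le> \<bar>t k\<bar>"
  shows "\<bar>t (n - 1)\<bar> \<le> \<bar>(\<Sum>k<n. t k) / of_nat n\<bar>"
proof -
  have "of_nat n * \<bar>t (n - 1)\<bar> \<le> (\<Sum>k<n. \<bar>t k\<bar>)"
    using sum_bounded_below[of "{..<n}" "\<bar>t (n - 1)\<bar>" "\<lambda>k. \<bar>t k\<bar>"]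
      le_of_step_decreasing[OF abs_decr, of _ "n - 1"] \<open>0 < n\<close>
    by simp
  also have "\<dots> = \<bar>\<Sum>k<n. t k\<bar>"
    using same_sign by (intro abs_sum_same_sign[symmetric]) auto
  finally show ?thesis
    using \<open>0 < n\<close> by (simp add: abs_divide field_simps)
qed

theorem corollary3p5:
  fixes P :: "('x \<times> 'y) measure"
    and train :: "('x \<times> 'y) list \<Rightarrow> 'x \<Rightarrow> 'y"
    and DT :: "('x \<times> 'y) list"
    and n i :: nat and zi :: "'x \<times> 'y"
  assumes "prob_space P"
    and "i < n"
    and "zi \<in> space P"
    and consistent: "(\<forall>k<n. tau_k P train DT n i zi k \<ge> 0) \<or> (\<forall>k<n. tau_k P train DT n i zi k < 0)"
    and var_mean: "(\<Sum>k<n. delta_k P train DT n i zi k) / real n \<le> delta_k P train DT n i zi (n - 1)"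
    and abs_decr: "\<forall>k. k + 1 < n \<longrightarrow> \<bar>tau_k P train DT n i zi (k + 1)\<bar> \<le> \<bar>tau_k P train DT n i zi k\<bar>"
    and "tau_k P train DT n i zi (n - 1) \<noteq> 0"
  shows "((\<Sum>k<n. delta_k P train DT n i zi k) / real n) / ((\<Sum>k<n. tau_k P train DT n i zi k) / real n)\<^sup>2
           \<le> delta_k P train DT n i zi (n - 1) / (tau_k P train DT n i zi (n - 1))\<^sup>2"
proof -
  let ?\<tau> = "tau_k P train DT n i zi"
  have same_sign: "(\<forall>k<n. 0 \<le> ?\<tau> k) \<or> (\<forall>k<n. ?\<tau> k \<le> 0)"
    using consistent by (auto intro: less_imp_le)
  have "\<bar>?\<tau> (n - 1)\<bar> \<le> \<bar>(\<Sum>k<n. ?\<tau> k) / real n\<bar>"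
    using abs_mean_ge_last[OF _ same_sign abs_decr] \<open>i < n\<close> by simp
  then have "(?\<tau> (n - 1))\<^sup>2 \<le> ((\<Sum>k<n. ?\<tau> k) / real n)\<^sup>2"
    by (simp only: abs_le_square_iff)
  moreover have "0 < (?\<tau> (n - 1))\<^sup>2"
    using \<open>?\<tau> (n - 1) \<noteq> 0\<close> by simp
  ultimately show ?thesis
    by (intro frac_le[OF delta_k_nonneg var_mean])
qed

end
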